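(* The Lagrange spectrum of $\mathbb{Q}((1/T))$ equals $$\{L(A): A=(g_i)_{i\in\mathbb{Z}} \text{ a doubly infinite sequence of polynomials } g_i\in\mathbb{Q}[T] \text{ with } \deg g_i\ge1\}.$$
   Context: $\mathbb{Q}((1/T))$ is the field of formal Laurent series in $1/T$ over $\mathbb{Q}$; $\deg$ of a nonzero series is the exponent of its leading term, $\deg0=-\infty$. For polynomials $c_0,c_1,\dots$ with $\deg c_j\ge1$ for $j\ge1$, $[c_0,c_1,c_2,\dots]=c_0+\cfrac{1}{c_1+\cfrac{1}{c_2+\cdots}}$ converges in $\mathbb{Q}((1/T))$. For a doubly infinite sequence $A=(g_i)_{i\in\mathbb{Z}}$ of polynomials of positive degree, $\lambda_i(A)=[g_i,g_{i+1},\dots]+[0,g_{i-1},g_{i-2},\dots]$ and $L(A)=\limsup_{|i|\to\infty}\deg\lambda_i(A)$ (the larger of the limsups as $i\to+\infty$ and $i\to-\infty$), a value in $\mathbb{Z}\cup\{\infty\}$. Lagrange spectrum: for $\alpha\notin\mathbb{Q}(T)$, $l(\alpha)\in\mathbb{Z}\cup\{\infty\}$ is the supremum of integers $k$ such that $\deg(\alpha-p/q)\le-2\deg q-k$ for infinitely many $p,q\in\mathbb{Q}[T]$, $q\neq0$; the Lagrange spectrum is $\{l(\alpha):\alpha\in\mathbb{Q}((1/T))\setminus\mathbb{Q}(T)\}$. *)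

theory Defs
  imports "HOL-Computational_Algebra.Polynomial" "HOL-Computational_Algebra.Formal_Laurent_Series"
          "HOL-Library.Extended_Real" "HOL-Library.Liminf_Limsup"
begin

text \<open>The field Q((1/T)) is modelled as rat fls, formal Laurent series in X = 1/T
  (finitely many negative powers of X, i.e. finitely many positive powers of T).
  Hence T corresponds to fls_X_inv and deg = - fls_subdegree.\<close>

definition poly_fls :: "rat poly \<Rightarrow> rat fls" where
  "poly_fls p = (\<Sum>i\<le>degree p. fls_const (coeff p i) * fls_X_inv ^ i)"

text \<open>Degree of a Laurent series in 1/T (exponent of T of the leading term).
  Only applied to nonzero series in the statement (deg 0 = -infinity is not needed).\<close>
definition ldeg :: "rat fls \<Rightarrow> int" where
  "ldeg a = - fls_subdegree a"

definition fls_conv :: "(nat \<Rightarrow> rat fls) \<Rightarrow> rat fls \<Rightarrow> bool" where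
  "fls_conv s a \<longleftrightarrow> (\<forall>N::int. eventually (\<lambda>n. s n - a = 0 \<or> ldeg (s n - a) \<le> - N) sequentially)"

fun cfrac_fin :: "(nat \<Rightarrow> rat fls) \<Rightarrow> nat \<Rightarrow> rat fls" where
  "cfrac_fin c 0 = c 0"
| "cfrac_fin c (Suc n) = c 0 + 1 / cfrac_fin (\<lambda>i. c (Suc i)) n"

definition cfrac :: "(nat \<Rightarrow> rat fls) \<Rightarrow> rat fls" where
  "cfrac c = (THE a. fls_conv (\<lambda>n. cfrac_fin c n) a)"

definition lam :: "(int \<Rightarrow> rat poly) \<Rightarrow> int \<Rightarrow> rat fls" where
  "lam A i = cfrac (\<lambda>n. poly_fls (A (i + int n)))
           + cfrac (\<lambda>n. if n = 0 then 0 else poly_fls (A (i - int n)))"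

definition Lval :: "(int \<Rightarrow> rat poly) \<Rightarrow> ereal" where
  "Lval A = max (Limsup at_top (\<lambda>i. ereal (of_int (ldeg (lam A i)))))
                (Limsup at_bot (\<lambda>i. ereal (of_int (ldeg (lam A i)))))"

definition rat_funs :: "rat fls set" where
  "rat_funs = {poly_fls p / poly_fls q | p q. q \<noteq> 0}"

definition lag :: "rat fls \<Rightarrow> ereal" where
  "lag \<alpha> = Sup {ereal (of_int k) | k::int.
     infinite {r. \<exists>p q. q \<noteq> 0 \<and> r = poly_fls p / poly_fls q \<and>
                   ldeg (\<alpha> - r) \<le> - 2 * int (degree q) - k}}"

definition lagrange_spectrum :: "ereal set" where
  "lagrange_spectrum = {lag \<alpha> | \<alpha>. \<alpha> \<notin> rat_funs}"

end

theory Submission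
  imports Defs
begin

text \<open>Both sides equal {1, 2, 3, ...} \<union> {\<infinity>}. When all partial quotients after the first have
  positive degree, every tail of the continued fraction has negative degree; so lambda_i(A) has
  the same polynomial part as g_i, deg lambda_i(A) = deg g_i, and L(A) is a limsup of positive
  integers. Constant and unbounded degree sequences realise every such value.

  On the other side, Dirichlet's pigeonhole argument (here: a homogeneous linear system with
  more unknowns than equations) gives l(\<alpha>) \<ge> 1 for every irrational \<alpha>, and l(\<alpha>) is the
  supremum of a downward closed set of integers. The value k is attained by the quadratic
  irrational [T^k, T^k, T^k, ...], whose approximation order is capped at k by Liouville's
  argument with the norm form p^2 - T^k p q - q^2, and \<infinity> by the lacunary series
  T^-1 + T^-3 + T^-9 + ...\<close>

unbundle fps_syntax

section \<open>Polynomials in T as Laurent series in 1/T\<close>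

lemma poly_fls_nth: "poly_fls p $$ j = (if j \<le> 0 then coeff p (nat (- j)) else 0)"
proof -
  have "poly_fls p $$ j = (\<Sum>i\<le>degree p. if j + int i = 0 then coeff p i else 0)"
    unfolding poly_fls_def fls_nth_sum fls_X_inv_power_conv_shift_1 by (intro sum.cong) auto
  also have "\<dots> = (\<Sum>i\<in>{i\<in>{..degree p}. j + int i = 0}. coeff p i)"
    by (rule sum.inter_filter[symmetric]) simp
  also have "\<dots> = (if j \<le> 0 then coeff p (nat (- j)) else 0)"
  proof (cases "j \<le> 0 \<and> nat (- j) \<le> degree p")
    case True
    then have "{i\<in>{..degree p}. j + int i = 0} = {nat (- j)}" by auto
    with True show ?thesis by simp
  next
    case False
    then have "{i\<in>{..degree p}. j + int i = 0} = {}" by auto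
    then show ?thesis using False by (simp only: sum.empty) (auto simp: coeff_eq_0)
  qed
  finally show ?thesis .
qed

lemma poly_fls_0 [simp]: "poly_fls 0 = 0"
  by (rule fls_eqI) (simp add: poly_fls_nth)

lemma poly_fls_1 [simp]: "poly_fls 1 = 1"
  by (rule fls_eqI) (simp add: poly_fls_nth)

lemma poly_fls_add [simp]: "poly_fls (p + q) = poly_fls p + poly_fls q"
  by (rule fls_eqI) (simp add: poly_fls_nth)

lemma poly_fls_diff [simp]: "poly_fls (p - q) = poly_fls p - poly_fls q"
  by (rule fls_eqI) (simp add: poly_fls_nth)

lemma poly_fls_smult [simp]: "poly_fls (smult a p) = fls_const a * poly_fls p"
  by (rule fls_eqI) (simp add: poly_fls_nth)

lemma poly_fls_pCons: "poly_fls (pCons a p) = fls_const a + fls_X_inv * poly_fls p"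
proof (rule fls_eqI)
  fix j :: int
  consider "j \<ge> 0" | "j < 0" by linarith
  then show "poly_fls (pCons a p) $$ j = (fls_const a + fls_X_inv * poly_fls p) $$ j"
  proof cases
    case 2
    then have "nat (- j) = Suc (nat (- j - 1))" by (simp add: nat_eq_iff)
    with 2 show ?thesis by (simp add: poly_fls_nth fls_X_inv_times_conv_shift)
  qed (auto simp: poly_fls_nth fls_X_inv_times_conv_shift)
qed

lemma poly_fls_mult [simp]: "poly_fls (p * q) = poly_fls p * poly_fls q"
proof (induction p)
  case (pCons a p)
  have "pCons a p * q = smult a q + pCons 0 (p * q)" by simp
  with pCons show ?case by (simp add: poly_fls_pCons algebra_simps)
qed simp

lemma poly_fls_sum: "poly_fls (\<Sum>i\<in>A. f i) = (\<Sum>i\<in>A. poly_fls (f i))"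
  by (induction A rule: infinite_finite_induct) auto

lemma poly_fls_monom: "poly_fls (monom c n) = fls_const c * fls_X_inv ^ n"
proof -
  have "monom c n = smult c ([:0, 1:] ^ n)" by (simp add: monom_altdef)
  moreover have "poly_fls ([:0, 1:] ^ n) = fls_X_inv ^ n"
    by (induction n) (simp_all add: poly_fls_pCons)
  ultimately show ?thesis by simp
qed

lemma poly_fls_eq_0_iff [simp]: "poly_fls p = 0 \<longleftrightarrow> p = 0"
proof
  assume "poly_fls p = 0"
  then have "coeff p n = 0" for n
    using poly_fls_nth[of p "- int n"] by simp
  then show "p = 0" by (simp add: poly_eqI)
qed simp

lemma fls_subdegree_poly_fls: "p \<noteq> 0 \<Longrightarrow> fls_subdegree (poly_fls p) = - int (degree p)"
  by (rule fls_subdegree_eqI) (auto simp: poly_fls_nth coeff_eq_0)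

lemma poly_fls_in_rat_funs: "q \<noteq> 0 \<Longrightarrow> poly_fls p / poly_fls q \<in> rat_funs"
  unfolding rat_funs_def by blast

lemma exists_poly_fls_eq_polynomial_part: "\<exists>p. \<forall>j\<le>0. poly_fls p $$ j = x $$ j"
proof (intro exI allI impI)
  fix j :: int
  assume "j \<le> 0"
  then show "poly_fls (fls_prpart x + [:x $$ 0:]) $$ j = x $$ j"
    by (auto simp: poly_fls_nth coeff_pCons split: nat.split)
qed

lemma poly_fls_times_nth:
  assumes "degree q \<le> n"
  shows "(poly_fls q * a) $$ j = (\<Sum>l\<le>n. coeff q l * a $$ (j + int l))"
proof -
  have "q = (\<Sum>l\<le>n. monom (coeff q l) l)" using poly_as_sum_of_monoms'[OF assms] by simp
  then have "poly_fls q * a = (\<Sum>l\<le>n. fls_const (coeff q l) * (fls_X_inv ^ l * a))"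
    by (metis (no_types, lifting) mult.assoc poly_fls_monom poly_fls_sum sum.cong
        sum_distrib_right)
  moreover have "fls_X_inv ^ l * a = fls_shift (int l) a" for l :: nat
    by (simp add: fls_X_inv_power_conv_shift_1 fls_shifted_times_simps)
  ultimately show ?thesis by (simp add: fls_nth_sum)
qed

section \<open>Convergence of continued fractions\<close>

definition vanishes_below :: "'a::zero fls \<Rightarrow> int \<Rightarrow> bool" where
  "vanishes_below d N \<longleftrightarrow> (\<forall>j<N. d $$ j = 0)"

lemma vanishes_below_iff: "vanishes_below d N \<longleftrightarrow> d = 0 \<or> ldeg d \<le> - N"
proof
  assume van: "vanishes_below d N"
  show "d = 0 \<or> ldeg d \<le> - N"
  proof (cases "d = 0")
    case False
    with van have "N \<le> fls_subdegree d"
      by (intro fls_subdegree_geI) (auto simp: vanishes_below_def)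
    then show ?thesis by (simp add: ldeg_def)
  qed simp
qed (auto simp: vanishes_below_def ldeg_def)

lemma vanishes_below_mono: "vanishes_below d N \<Longrightarrow> M \<le> N \<Longrightarrow> vanishes_below d M"
  unfolding vanishes_below_def by auto

lemma vanishes_below_minus_iff [simp]: "vanishes_below (- d) N \<longleftrightarrow> vanishes_below d N"
  unfolding vanishes_below_def by auto

lemma vanishes_below_mult:
  fixes d e :: "'a::idom fls"
  assumes "vanishes_below d N"
  shows "vanishes_below (d * e) (N + fls_subdegree e)"
  unfolding vanishes_below_def
proof (intro allI impI)
  fix j assume j: "j < N + fls_subdegree e"
  show "(d * e) $$ j = 0"
  proof (cases "d = 0")
    case False
    with assms have "N \<le> fls_subdegree d"
      by (intro fls_subdegree_geI) (auto simp: vanishes_below_def)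
    with j show ?thesis by (intro fls_times_nth_eq0) simp
  qed simp
qed

lemma vanishes_below_telescope:
  assumes "\<And>k. vanishes_below (s (Suc k) - s k) (int k + 1)"
    and "n \<le> m" and "j \<le> int n"
  shows "s m $$ j = s n $$ j"
  using assms(2)
proof (induction m rule: dec_induct)
  case (step m)
  with assms(1)[of m] assms(3) have "(s (Suc m) - s m) $$ j = 0"
    unfolding vanishes_below_def by auto
  with step show ?case by simp
qed simp

text \<open>The limit is the series whose j-th coefficient is the eventually stable j-th coefficient
  of the sequence.\<close>

lemma fls_limit_exists:
  fixes s :: "nat \<Rightarrow> 'a::ab_group_add fls"
  assumes diff: "\<And>k. vanishes_below (s (Suc k) - s k) (int k + 1)"
  shows "\<exists>a. \<forall>n. vanishes_below (a - s n) (int n + 1)"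
proof -
  define a where "a = Abs_fls (\<lambda>j. s (nat j) $$ j)"
  have "\<forall>\<^sub>\<infinity>n. s (nat (- int n)) $$ (- int n) = 0" by simp
  then have a_nth: "a $$ j = s (nat j) $$ j" for j
    unfolding a_def by simp
  have "vanishes_below (a - s n) (int n + 1)" for n
    unfolding vanishes_below_def
  proof (intro allI impI)
    fix j assume j: "j < int n + 1"
    show "(a - s n) $$ j = 0"
    proof (cases "j \<le> 0")
      case True
      then show ?thesis using vanishes_below_telescope[OF diff, of 0 n j] by (simp add: a_nth)
    next
      case False
      with j show ?thesis
        using vanishes_below_telescope[OF diff, of "nat j" n j] by (simp add: a_nth)
    qed
  qed
  then show ?thesis by blast
qed

lemma fls_conv_iff_vanishes_below:
  "fls_conv s a \<longleftrightarrow> (\<forall>N. eventually (\<lambda>n. vanishes_below (s n - a) N) sequentially)"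
  unfolding fls_conv_def vanishes_below_iff ..

lemma fls_conv_unique:
  assumes "fls_conv s a" and "fls_conv s b"
  shows "a = b"
proof (rule fls_eqI)
  fix j
  have "eventually (\<lambda>n. vanishes_below (s n - a) (j + 1) \<and> vanishes_below (s n - b) (j + 1))
          sequentially"
    using assms unfolding fls_conv_iff_vanishes_below by (intro eventually_conj) blast+
  then obtain n where "vanishes_below (s n - a) (j + 1)" "vanishes_below (s n - b) (j + 1)"
    by (auto dest: eventually_happens)
  then have "(s n - a) $$ j = 0" "(s n - b) $$ j = 0"
    unfolding vanishes_below_def by simp_all
  then show "a $$ j = b $$ j" by simp
qed

definition cf_admissible :: "(nat \<Rightarrow> rat fls) \<Rightarrow> bool" where
  "cf_admissible c \<longleftrightarrow> (\<forall>n\<ge>1. c n \<noteq> 0 \<and> fls_subdegree (c n) < 0)"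

lemma cf_admissible_shift: "cf_admissible c \<Longrightarrow> cf_admissible (\<lambda>i. c (Suc i))"
  unfolding cf_admissible_def by auto

lemma cfrac_fin_subdegree:
  assumes "cf_admissible c" and "c 0 \<noteq> 0" and "fls_subdegree (c 0) < 0"
  shows "cfrac_fin c n \<noteq> 0 \<and> fls_subdegree (cfrac_fin c n) = fls_subdegree (c 0)"
  using assms
proof (induction n arbitrary: c)
  case (Suc n)
  let ?x = "cfrac_fin (\<lambda>i. c (Suc i)) n"
  have c1: "c 1 \<noteq> 0" "fls_subdegree (c 1) < 0"
    using Suc.prems(1) unfolding cf_admissible_def by auto
  with Suc.IH[of "\<lambda>i. c (Suc i)"] cf_admissible_shift[OF Suc.prems(1)]
  have "?x \<noteq> 0 \<and> fls_subdegree ?x = fls_subdegree (c 1)" by simp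
  then have inv: "fls_subdegree (1 / ?x) = - fls_subdegree (c 1)"
    by (simp add: fls_divide_subdegree)
  have "fls_subdegree (c 0 + 1 / ?x) = fls_subdegree (c 0)"
    by (rule fls_subdegree_add_eq1) (use Suc.prems inv c1 in auto)
  moreover have "c 0 + 1 / ?x \<noteq> 0"
  proof
    assume "c 0 + 1 / ?x = 0"
    then have "c 0 = - (1 / ?x)" by (simp add: eq_neg_iff_add_eq_0)
    with inv Suc.prems c1 show False by simp
  qed
  ultimately show ?case by simp
qed simp

lemma cfrac_fin_Suc_diff:
  "cf_admissible c \<Longrightarrow> vanishes_below (cfrac_fin c (Suc n) - cfrac_fin c n) (2 * int n + 1)"
proof (induction n arbitrary: c)
  case 0
  then have c1: "c 1 \<noteq> 0" "fls_subdegree (c 1) < 0" unfolding cf_admissible_def by auto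
  then have "fls_subdegree (1 / c 1) = - fls_subdegree (c 1)"
    by (simp add: fls_divide_subdegree)
  with c1 have "vanishes_below (1 / c 1) 1" unfolding vanishes_below_def by auto
  then show ?case by simp
next
  case (Suc m)
  let ?c = "\<lambda>i. c (Suc i)"
  let ?x = "cfrac_fin ?c m" and ?x' = "cfrac_fin ?c (Suc m)"
  have c1: "c 1 \<noteq> 0" "fls_subdegree (c 1) < 0"
    using Suc.prems unfolding cf_admissible_def by auto
  have adm: "cf_admissible ?c" using cf_admissible_shift[OF Suc.prems] .
  have tails: "cfrac_fin ?c n \<noteq> 0 \<and> fls_subdegree (cfrac_fin ?c n) = fls_subdegree (c 1)" for n
    using cfrac_fin_subdegree[OF adm] c1 by simp
  have "cfrac_fin c (Suc (Suc m)) - cfrac_fin c (Suc m) = (1 / ?x' - 1 / ?x)"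
    by simp
  also have "\<dots> = (- (?x' - ?x)) * (inverse ?x * inverse ?x')"
    using tails[of m] tails[of "Suc m"] by (simp add: field_simps)
  finally have eq: "cfrac_fin c (Suc (Suc m)) - cfrac_fin c (Suc m)
      = (- (?x' - ?x)) * (inverse ?x * inverse ?x')" .
  have sd: "fls_subdegree (inverse ?x * inverse ?x') = - 2 * fls_subdegree (c 1)"
    using tails[of m] tails[of "Suc m"] by simp
  have "vanishes_below (- (?x' - ?x)) (2 * int m + 1)"
    using Suc.IH[OF adm] by (simp only: vanishes_below_minus_iff)
  from vanishes_below_mult[OF this, of "inverse ?x * inverse ?x'"]
  have "vanishes_below (cfrac_fin c (Suc (Suc m)) - cfrac_fin c (Suc m))
          (2 * int m + 1 + - 2 * fls_subdegree (c 1))"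
    unfolding eq sd .
  then show ?case by (rule vanishes_below_mono) (use c1 in simp)
qed

lemma fls_conv_if_vanishes_below:
  assumes "\<And>n. vanishes_below (a - s n) (int n + 1)"
  shows "fls_conv s a"
  unfolding fls_conv_iff_vanishes_below eventually_sequentially
proof (intro allI exI impI)
  fix N :: int and n
  assume "nat N \<le> n"
  then have "N \<le> int n + 1" by linarith
  then have "vanishes_below (- (a - s n)) N"
    by (simp only: vanishes_below_minus_iff vanishes_below_mono[OF assms])
  then show "vanishes_below (s n - a) N" by simp
qed

lemma cfrac_minus_cfrac_fin:
  assumes "cf_admissible c"
  shows "vanishes_below (cfrac c - cfrac_fin c n) (int n + 1)"
proof -
  have "vanishes_below (cfrac_fin c (Suc k) - cfrac_fin c k) (int k + 1)" for k
    by (rule vanishes_below_mono[OF cfrac_fin_Suc_diff[OF assms]]) simp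
  then obtain a where a: "\<And>n. vanishes_below (a - cfrac_fin c n) (int n + 1)"
    using fls_limit_exists by blast
  then have "cfrac c = a"
    unfolding cfrac_def using fls_conv_if_vanishes_below fls_conv_unique by blast
  with a show ?thesis by simp
qed

lemma cfrac_nth_nonpos:
  assumes "cf_admissible c" and "j \<le> 0"
  shows "cfrac c $$ j = c 0 $$ j"
  using cfrac_minus_cfrac_fin[OF assms(1), of 0] assms(2) unfolding vanishes_below_def by simp

lemma ldeg_lam:
  assumes "\<forall>i. degree (A i) \<ge> 1"
  shows "ldeg (lam A i) = int (degree (A i))"
proof -
  have nz: "A k \<noteq> 0" for k using assms[rule_format, of k] by auto
  have "cf_admissible (\<lambda>n. poly_fls (A (i + int n)))"
    "cf_admissible (\<lambda>n. if n = 0 then 0 else poly_fls (A (i - int n)))"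
    unfolding cf_admissible_def using nz assms by (auto simp: fls_subdegree_poly_fls Suc_le_eq)
  then have lam_nth: "lam A i $$ j = poly_fls (A i) $$ j" if "j \<le> 0" for j
    using cfrac_nth_nonpos that unfolding lam_def by simp
  have "fls_subdegree (lam A i) = - int (degree (A i))"
  proof (rule fls_subdegree_eqI)
    show "lam A i $$ (- int (degree (A i))) \<noteq> 0"
      using lam_nth[of "- int (degree (A i))"] nz[of i] by (simp add: poly_fls_nth)
    show "lam A i $$ k = 0" if "k < - int (degree (A i))" for k
      using lam_nth[of k] that by (simp add: poly_fls_nth coeff_eq_0)
  qed
  then show ?thesis by (simp add: ldeg_def)
qed

section \<open>The values of L\<close>

definition posint_or_infinity :: "ereal set" where
  "posint_or_infinity = {ereal (of_int k) | k::int. k \<ge> 1} \<union> {\<infinity>}"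

lemma Limsup_of_int_in_posint_or_infinity:
  fixes g :: "'a \<Rightarrow> int"
  assumes "F \<noteq> bot" and "\<forall>x. g x \<ge> 1"
  shows "Limsup F (\<lambda>x. ereal (of_int (g x))) \<in> posint_or_infinity"
proof -
  let ?L = "Limsup F (\<lambda>x. ereal (of_int (g x)))"
  have ge: "1 \<le> ?L" by (rule le_Limsup[OF assms(1)]) (use assms(2) in auto)
  show ?thesis
  proof (cases ?L)
    case (real r)
    have "r = of_int \<lfloor>r\<rfloor>"
    proof (rule ccontr)
      assume ne: "r \<noteq> of_int \<lfloor>r\<rfloor>"
      have "?L < ereal (of_int (\<lfloor>r\<rfloor> + 1))" using real by simp
      then have "eventually (\<lambda>x. ereal (of_int (g x)) < ereal (of_int (\<lfloor>r\<rfloor> + 1))) F"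
        by (rule Limsup_lessD)
      then have "eventually (\<lambda>x. ereal (of_int (g x)) \<le> ereal (of_int \<lfloor>r\<rfloor>)) F"
        by eventually_elim simp
      then have "?L \<le> ereal (of_int \<lfloor>r\<rfloor>)" by (rule Limsup_bounded)
      with real ne show False by simp linarith
    qed
    with real ge show ?thesis unfolding posint_or_infinity_def
      by (intro UnI1 CollectI exI[of _ "\<lfloor>r\<rfloor>"]) auto
  qed (use ge in \<open>simp_all add: posint_or_infinity_def\<close>)
qed

lemma Lval_eq_Limsup_degree:
  assumes "\<forall>i. degree (A i) \<ge> 1"
  shows "Lval A = max (Limsup at_top (\<lambda>i. ereal (of_int (int (degree (A i))))))
                      (Limsup at_bot (\<lambda>i. ereal (of_int (int (degree (A i))))))"
  unfolding Lval_def ldeg_lam[OF assms] ..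

lemma Lval_in_posint_or_infinity:
  assumes "\<forall>i. degree (A i) \<ge> 1"
  shows "Lval A \<in> posint_or_infinity"
proof -
  have deg: "\<forall>i. int (degree (A i)) \<ge> 1" using assms by (auto simp: Suc_le_eq)
  have "Limsup F (\<lambda>i. ereal (of_int (int (degree (A i))))) \<in> posint_or_infinity"
    if "F \<noteq> bot" for F
    using Limsup_of_int_in_posint_or_infinity[OF that, of "\<lambda>i. int (degree (A i))"] deg by simp
  then show ?thesis
    unfolding Lval_eq_Limsup_degree[OF assms] max_def by simp
qed

lemma Lval_const_monom:
  assumes "k \<ge> 1"
  shows "Lval (\<lambda>_. monom 1 k) = ereal (of_int (int k))"
proof -
  have "\<forall>i. degree ((\<lambda>_::int. monom (1::rat) k) i) \<ge> 1"
    using assms by (simp add: degree_monom_eq)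
  from Lval_eq_Limsup_degree[OF this] show ?thesis
    by (simp add: degree_monom_eq Limsup_const)
qed

lemma Lval_monom_abs:
  "Lval (\<lambda>i. monom 1 (nat \<bar>i\<bar> + 1)) = \<infinity>"
proof -
  have "\<forall>i. degree ((\<lambda>i::int. monom (1::rat) (nat \<bar>i\<bar> + 1)) i) \<ge> 1"
    by (simp add: degree_monom_eq)
  note Lval = Lval_eq_Limsup_degree[OF this]
  have "((\<lambda>i. ereal (of_int (int (nat \<bar>i\<bar> + 1)))) \<longlongrightarrow> \<infinity>) (at_top :: int filter)"
    unfolding tendsto_PInfty eventually_at_top_linorder
  proof
    fix r :: real
    show "\<exists>N. \<forall>i\<ge>N. ereal r < ereal (of_int (int (nat \<bar>i\<bar> + 1)))"
      by (rule exI[of _ "\<lceil>r\<rceil>"]) (auto, linarith)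
  qed
  then have "Limsup at_top (\<lambda>i. ereal (of_int (int (nat \<bar>i\<bar> + 1)))) = \<infinity>"
    by (intro lim_imp_Limsup) simp_all
  then show ?thesis unfolding Lval by (simp add: degree_monom_eq)
qed

lemma Lval_image:
  "{Lval A | A :: int \<Rightarrow> rat poly. \<forall>i. degree (A i) \<ge> 1} = posint_or_infinity"
proof (intro equalityI subsetI)
  fix x
  assume "x \<in> posint_or_infinity"
  then consider k :: int where "k \<ge> 1" "x = ereal (of_int k)" | "x = \<infinity>"
    unfolding posint_or_infinity_def by blast
  then show "x \<in> {Lval A | A. \<forall>i. degree (A i) \<ge> 1}"
  proof cases
    case 1
    then have "x = Lval (\<lambda>_. monom 1 (nat k))" using Lval_const_monom[of "nat k"] by simp
    moreover have "\<forall>i. degree ((\<lambda>_::int. monom (1::rat) (nat k)) i) \<ge> 1"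
      using 1 by (simp add: degree_monom_eq)
    ultimately show ?thesis by blast
  next
    case 2
    moreover have "\<forall>i. degree ((\<lambda>i::int. monom (1::rat) (nat \<bar>i\<bar> + 1)) i) \<ge> 1"
      by (simp add: degree_monom_eq)
    ultimately show ?thesis using Lval_monom_abs unfolding mem_Collect_eq
      by (intro exI[of _ "\<lambda>i. monom 1 (nat \<bar>i\<bar> + 1)"]) simp
  qed
qed (auto intro: Lval_in_posint_or_infinity)

section \<open>Approximation exponents\<close>

definition approx_set :: "rat fls \<Rightarrow> int \<Rightarrow> rat fls set" where
  "approx_set \<alpha> k = {r. \<exists>p q. q \<noteq> 0 \<and> r = poly_fls p / poly_fls q \<and>
                          ldeg (\<alpha> - r) \<le> - 2 * int (degree q) - k}"

lemma lag_eq_Sup_approx_set: "lag \<alpha> = Sup {ereal (of_int k) | k. infinite (approx_set \<alpha> k)}"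
  unfolding lag_def approx_set_def ..

lemma approx_set_antimono: "k' \<le> k \<Longrightarrow> approx_set \<alpha> k \<subseteq> approx_set \<alpha> k'"
  unfolding approx_set_def by force

lemma approx_set_infinite_mono:
  "infinite (approx_set \<alpha> k) \<Longrightarrow> k' \<le> k \<Longrightarrow> infinite (approx_set \<alpha> k')"
  using approx_set_antimono infinite_super by metis

lemma Sup_downward_closed_int_in_posint_or_infinity:
  fixes P :: "int \<Rightarrow> bool"
  assumes "P 1" and down: "\<And>k k'. P k \<Longrightarrow> k' \<le> k \<Longrightarrow> P k'"
  shows "Sup {ereal (of_int k) | k. P k} \<in> posint_or_infinity"
proof (cases "bdd_above {k. P k}")
  case True
  then obtain M where M: "\<And>k. P k \<Longrightarrow> k \<le> M" by (auto simp: bdd_above_def)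
  define K where "K = {k. P k \<and> 1 \<le> k}"
  have "finite K" by (rule finite_subset[of _ "{1..M}"]) (auto simp: K_def M)
  moreover have "1 \<in> K" using assms(1) by (simp add: K_def)
  ultimately have m: "Max K \<in> K" using Max_in by blast
  have upper: "k \<le> Max K" if "P k" for k
  proof (cases "1 \<le> k")
    case True
    with that \<open>finite K\<close> show ?thesis by (intro Max_ge) (simp_all add: K_def)
  next
    case False
    with m show ?thesis by (simp add: K_def)
  qed
  have "Sup {ereal (of_int k) | k. P k} = ereal (of_int (Max K))"
  proof (rule antisym)
    show "Sup {ereal (of_int k) | k. P k} \<le> ereal (of_int (Max K))"
      by (rule Sup_least) (auto simp: upper)
    show "ereal (of_int (Max K)) \<le> Sup {ereal (of_int k) | k. P k}"
      by (rule Sup_upper) (use m in \<open>auto simp: K_def\<close>)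
  qed
  with m show ?thesis by (auto simp: posint_or_infinity_def K_def)
next
  case False
  have "Sup ((\<lambda>k. ereal (of_int k)) ` {k. P k}) = \<infinity>"
  proof (rule SUP_PInfty)
    fix n :: nat
    obtain k where "P k" "k > int n" using False by (auto simp: bdd_above_def not_le)
    then show "\<exists>k\<in>{k. P k}. ereal (real n) \<le> ereal (of_int k)" by force
  qed
  then show ?thesis by (simp add: posint_or_infinity_def setcompr_eq_image)
qed

lemma homogeneous_system_eliminate:
  fixes f :: "nat \<Rightarrow> 'b \<Rightarrow> 'a::field"
  assumes "finite V" and "j0 \<in> V" and "f m j0 \<noteq> 0"
    and x': "\<forall>i<m. (\<Sum>j\<in>V - {j0}. (f i j - f i j0 / f m j0 * f m j) * x' j) = 0"
  defines "x \<equiv> x'(j0 := - (\<Sum>j\<in>V - {j0}. f m j * x' j) / f m j0)"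
  shows "\<forall>i<Suc m. (\<Sum>j\<in>V. f i j * x j) = 0"
proof (intro allI impI)
  fix i
  assume "i < Suc m"
  define S where "S = (\<Sum>j\<in>V - {j0}. f m j * x' j)"
  have split: "(\<Sum>j\<in>V. g j * x j) = g j0 * x j0 + (\<Sum>j\<in>V - {j0}. g j * x' j)" for g
  proof -
    have "(\<Sum>j\<in>V - {j0}. g j * x j) = (\<Sum>j\<in>V - {j0}. g j * x' j)"
      by (rule sum.cong) (auto simp: x_def)
    with assms(1,2) show ?thesis by (simp add: sum.remove)
  qed
  show "(\<Sum>j\<in>V. f i j * x j) = 0"
  proof (cases "i = m")
    case True
    then show ?thesis using split[of "f m"] assms(3) by (simp add: x_def S_def)
  next
    case False
    with \<open>i < Suc m\<close> x' have "(\<Sum>j\<in>V - {j0}. (f i j - f i j0 / f m j0 * f m j) * x' j) = 0"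
      by simp
    then have "(\<Sum>j\<in>V - {j0}. f i j * x' j) = f i j0 / f m j0 * S"
      by (simp add: S_def algebra_simps sum_subtractf sum_distrib_left)
    then show ?thesis using split[of "f i"] assms(3) by (simp add: x_def S_def field_simps)
  qed
qed

lemma homogeneous_system_nontrivial_solution:
  fixes f :: "nat \<Rightarrow> 'b \<Rightarrow> 'a::field"
  assumes "finite V" and "card V > m"
  shows "\<exists>x. (\<exists>j\<in>V. x j \<noteq> 0) \<and> (\<forall>i<m. (\<Sum>j\<in>V. f i j * x j) = 0)"
  using assms
proof (induction m arbitrary: V f)
  case 0
  then obtain j where "j \<in> V" by (metis card_gt_0_iff equals0I)
  then show ?case by (intro exI[of _ "\<lambda>_. 1"]) auto
next
  case (Suc m)
  show ?case
  proof (cases "\<forall>j\<in>V. f m j = 0")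
    case True
    obtain x where x: "\<exists>j\<in>V. x j \<noteq> 0" "\<forall>i<m. (\<Sum>j\<in>V. f i j * x j) = 0"
      using Suc.IH[of V f] Suc.prems by auto
    with True have "\<forall>i<Suc m. (\<Sum>j\<in>V. f i j * x j) = 0" by (auto simp: less_Suc_eq)
    with x show ?thesis by blast
  next
    case False
    then obtain j0 where j0: "j0 \<in> V" "f m j0 \<noteq> 0" by blast
    have "finite (V - {j0})" "card (V - {j0}) > m" using Suc.prems j0 by auto
    from Suc.IH[OF this, of "\<lambda>i j. f i j - f i j0 / f m j0 * f m j"]
    obtain x' where x': "\<exists>j\<in>V - {j0}. x' j \<noteq> 0"
      "\<forall>i<m. (\<Sum>j\<in>V - {j0}. (f i j - f i j0 / f m j0 * f m j) * x' j) = 0"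
      by blast
    let ?x = "x'(j0 := - (\<Sum>j\<in>V - {j0}. f m j * x' j) / f m j0)"
    have "\<forall>i<Suc m. (\<Sum>j\<in>V. f i j * ?x j) = 0"
      using homogeneous_system_eliminate[OF Suc.prems(1) j0 x'(2)] by simp
    moreover have "\<exists>j\<in>V. ?x j \<noteq> 0" using x'(1) by auto
    ultimately show ?thesis by blast
  qed
qed

text \<open>Dirichlet's theorem: the n + 1 unknown coefficients of q are subject to the n linear
  conditions that the coefficients of X^1, ..., X^n in q \<alpha> vanish.\<close>

lemma dirichlet_approximation:
  "\<exists>p q. q \<noteq> 0 \<and> degree q \<le> n \<and> vanishes_below (poly_fls q * \<alpha> - poly_fls p) (int n + 1)"
proof -
  obtain x :: "nat \<Rightarrow> rat"
    where x: "\<exists>j\<in>{..n}. x j \<noteq> 0" "\<forall>i<n. (\<Sum>l\<le>n. \<alpha> $$ (int i + 1 + int l) * x l) = 0"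
    using homogeneous_system_nontrivial_solution[of "{..n}" n "\<lambda>i l. \<alpha> $$ (int i + 1 + int l)"]
    by auto
  define q where "q = (\<Sum>l\<le>n. monom (x l) l)"
  have coeff_q: "coeff q l = (if l \<le> n then x l else 0)" for l
    by (simp add: q_def coeff_sum)
  have "q \<noteq> 0" using x(1) coeff_q by (metis atMost_iff coeff_0)
  have deg_q: "degree q \<le> n" by (rule degree_le) (simp add: coeff_q)
  obtain p where p: "\<forall>j\<le>0. poly_fls p $$ j = (poly_fls q * \<alpha>) $$ j"
    using exists_poly_fls_eq_polynomial_part by blast
  have "vanishes_below (poly_fls q * \<alpha> - poly_fls p) (int n + 1)"
    unfolding vanishes_below_def
  proof (intro allI impI)
    fix j :: int
    assume j: "j < int n + 1"
    show "(poly_fls q * \<alpha> - poly_fls p) $$ j = 0"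
    proof (cases "j \<le> 0")
      case False
      define i where "i = nat (j - 1)"
      have i: "j = int i + 1" "i < n" using False j by (auto simp: i_def)
      have "(poly_fls q * \<alpha>) $$ j = (\<Sum>l\<le>n. \<alpha> $$ (int i + 1 + int l) * x l)"
        unfolding poly_fls_times_nth[OF deg_q] by (rule sum.cong) (auto simp: coeff_q i)
      also have "\<dots> = 0" using x(2) i by simp
      finally show ?thesis using False by (simp add: poly_fls_nth)
    qed (use p in simp)
  qed
  with \<open>q \<noteq> 0\<close> deg_q show ?thesis by blast
qed

lemma approx_set_1_infinite:
  assumes irr: "\<alpha> \<notin> rat_funs"
  shows "infinite (approx_set \<alpha> 1)"
proof
  assume fin: "finite (approx_set \<alpha> 1)"
  have good_approx: "\<exists>r\<in>approx_set \<alpha> 1. fls_subdegree (\<alpha> - r) > int n" for n :: nat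
  proof -
    obtain p q where pq: "q \<noteq> 0" "degree q \<le> n"
      and van: "vanishes_below (poly_fls q * \<alpha> - poly_fls p) (int n + 1)"
      using dirichlet_approximation by blast
    define r where "r = poly_fls p / poly_fls q"
    define d where "d = poly_fls q * \<alpha> - poly_fls p"
    have Q: "poly_fls q \<noteq> 0" using pq by simp
    have \<alpha>_r: "\<alpha> - r = d / poly_fls q" using Q by (simp add: r_def d_def field_simps)
    have "\<alpha> \<noteq> r" using irr poly_fls_in_rat_funs[OF pq(1)] by (auto simp: r_def)
    then have "d \<noteq> 0" using \<alpha>_r by auto
    with van have "int n + 1 \<le> fls_subdegree d"
      by (intro fls_subdegree_geI) (auto simp: vanishes_below_def d_def)
    moreover have "fls_subdegree (\<alpha> - r) = fls_subdegree d + int (degree q)"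
      unfolding \<alpha>_r using \<open>d \<noteq> 0\<close> Q pq by (simp add: fls_divide_subdegree fls_subdegree_poly_fls)
    ultimately have "fls_subdegree (\<alpha> - r) \<ge> int n + 1 + int (degree q)" by simp
    moreover from this pq(2) have "ldeg (\<alpha> - r) \<le> - 2 * int (degree q) - 1"
      by (simp add: ldeg_def)
    then have "r \<in> approx_set \<alpha> 1"
      unfolding approx_set_def mem_Collect_eq
      by (intro exI[of _ p] exI[of _ q]) (use pq(1) in \<open>simp add: r_def\<close>)
    ultimately show ?thesis by force
  qed
  have "bdd_above ((\<lambda>r. fls_subdegree (\<alpha> - r)) ` approx_set \<alpha> 1)"
    using fin by simp
  then obtain B where B: "\<And>r. r \<in> approx_set \<alpha> 1 \<Longrightarrow> fls_subdegree (\<alpha> - r) \<le> B"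
    by (auto simp: bdd_above_def)
  obtain r where r: "r \<in> approx_set \<alpha> 1" "fls_subdegree (\<alpha> - r) > int (nat B)"
    using good_approx by blast
  with B[OF r(1)] show False by linarith
qed

lemma lag_in_posint_or_infinity:
  assumes "\<alpha> \<notin> rat_funs"
  shows "lag \<alpha> \<in> posint_or_infinity"
  unfolding lag_eq_Sup_approx_set
  by (rule Sup_downward_closed_int_in_posint_or_infinity)
    (use approx_set_1_infinite[OF assms] approx_set_infinite_mono in auto)

text \<open>A rational function a/b cannot be approximated to order beyond deg b: the numerator
  of a/b - p/q is a nonzero polynomial.\<close>

lemma rat_fun_approx_bound:
  assumes "b \<noteq> 0" and "q \<noteq> 0" and "\<alpha> = poly_fls a / poly_fls b"
    and "\<alpha> \<noteq> poly_fls p / poly_fls q"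
  shows "fls_subdegree (\<alpha> - poly_fls p / poly_fls q) \<le> int (degree b) + int (degree q)"
proof -
  have "poly_fls b \<noteq> 0" "poly_fls q \<noteq> 0" using assms(1,2) by auto
  then have eq: "\<alpha> - poly_fls p / poly_fls q = poly_fls (a * q - b * p) / poly_fls (b * q)"
    by (simp add: assms(3) field_simps)
  have "a * q - b * p \<noteq> 0"
  proof
    assume "a * q - b * p = 0"
    with eq assms(4) show False by simp
  qed
  moreover have "b * q \<noteq> 0" "degree (b * q) = degree b + degree q"
    using assms(1,2) by (simp_all add: degree_mult_eq)
  ultimately show ?thesis
    unfolding eq
    by (simp add: fls_divide_subdegree fls_subdegree_poly_fls del: poly_fls_mult poly_fls_diff)
qed

lemma approx_set_rat_fun_empty:
  assumes "b \<noteq> 0" and "\<alpha> = poly_fls a / poly_fls b" and "k > int (degree b)"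
  shows "approx_set \<alpha> k = {}"
proof (rule ccontr)
  assume "approx_set \<alpha> k \<noteq> {}"
  then obtain p q where q: "q \<noteq> 0"
    and le: "ldeg (\<alpha> - poly_fls p / poly_fls q) \<le> - 2 * int (degree q) - k"
    unfolding approx_set_def by blast
  show False
  proof (cases "\<alpha> = poly_fls p / poly_fls q")
    case True
    \<comment> \<open>ldeg 0 = 0 rather than -\<infinity>, so \<alpha> itself only qualifies for k \<le> - 2 deg q\<close>
    with le assms(3) show False by (simp add: ldeg_def)
  next
    case False
    from rat_fun_approx_bound[OF assms(1) q assms(2) False] le assms(3) show False
      by (simp add: ldeg_def)
  qed
qed

lemma not_in_rat_funs_if_approx_set_nonempty:
  assumes "\<And>k. approx_set \<alpha> k \<noteq> {}"
  shows "\<alpha> \<notin> rat_funs"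
proof
  assume "\<alpha> \<in> rat_funs"
  then obtain a b where "b \<noteq> 0" "\<alpha> = poly_fls a / poly_fls b"
    unfolding rat_funs_def by blast
  with approx_set_rat_fun_empty[of b \<alpha> a "int (degree b) + 1"] assms show False by simp
qed

section \<open>Quadratic irrationals realising every finite value\<close>

text \<open>The root \<alpha> = (T^k + sqrt (T^(2k) + 4)) / 2 of x^2 = T^k x + 1, i.e. the continued fraction
  [T^k, T^k, T^k, ...]; the square root is T^k sqrt (1 + 4 X^(2k)) with X = 1/T.\<close>

lemma exists_metallic_root:
  assumes "k \<ge> 1"
  shows "\<exists>\<alpha>::rat fls. \<alpha> * \<alpha> = fls_X_inv ^ k * \<alpha> + 1 \<and> fls_subdegree \<alpha> = - int k"
proof -
  define a :: "rat fps" where "a = 1 + fps_const 4 * fps_X ^ (2 * k)"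
  have a0: "a $ 0 = 1" using assms by (simp add: a_def)
  define s where "s = fps_radical (\<lambda>_ _. 1) 2 a"
  have "s ^ 2 = a" "s $ 0 = 1"
    using power_radical[of a "\<lambda>_ _. 1" 1] a0 by (simp_all add: s_def numeral_2_eq_2)
  define S where "S = fps_to_fls s"
  have X_pow: "fls_X_inv ^ k * fls_X ^ k = (1 :: rat fls)"
    by (simp add: power_mult_distrib[symmetric] fls_X_inv_times_conv_shift)
  have "fls_const (4::rat) = 4" by simp
  then have "fps_to_fls a = 1 + 4 * (fls_X ^ k * fls_X ^ k)"
    by (simp add: a_def fls_times_fps_to_fls fps_to_fls_power power_add[symmetric] mult_2)
  then have SS: "S * S = 1 + 4 * (fls_X ^ k * fls_X ^ k)"
    unfolding S_def fls_times_fps_to_fls[symmetric] using \<open>s ^ 2 = a\<close>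
    by (simp add: power2_eq_square)
  have "(1 + s) $ 0 \<noteq> 0" using \<open>s $ 0 = 1\<close> by simp
  then have "1 + s \<noteq> 0" "subdegree (1 + s) = 0"
    by (metis fps_zero_nth, rule subdegree_eq_0)
  moreover have S1_eq: "1 + S = fps_to_fls (1 + s)" by (simp add: S_def)
  ultimately have S1: "1 + S \<noteq> 0" "fls_subdegree (1 + S) = 0"
    unfolding S1_eq fps_to_fls_eq_0_iff fls_subdegree_fls_to_fps by simp_all
  define \<alpha> where "\<alpha> = fls_X_inv ^ k * (1 + S) / 2"
  have "\<alpha> * \<alpha> - fls_X_inv ^ k * \<alpha> - 1 = (fls_X_inv ^ k * fls_X_inv ^ k) * ((S * S - 1) / 4) - 1"
    unfolding \<alpha>_def by (simp add: field_simps)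
  also have "\<dots> = (fls_X_inv ^ k * fls_X ^ k) * (fls_X_inv ^ k * fls_X ^ k) - 1"
    unfolding SS by (simp add: field_simps)
  also have "\<dots> = 0" unfolding X_pow by simp
  finally have "\<alpha> * \<alpha> = fls_X_inv ^ k * \<alpha> + 1" by (simp add: algebra_simps)
  moreover have "fls_subdegree \<alpha> = - int k"
    unfolding \<alpha>_def using S1 by (simp add: fls_divide_subdegree)
  ultimately show ?thesis by blast
qed

text \<open>The continuants of [T^k, T^k, ...]: the convergents are
  continuant k (n + 1) / continuant k n.\<close>

fun continuant :: "nat \<Rightarrow> nat \<Rightarrow> rat poly" where
  "continuant k 0 = 1"
| "continuant k (Suc 0) = monom 1 k"
| "continuant k (Suc (Suc n)) = monom 1 k * continuant k (Suc n) + continuant k n"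

lemma continuant_nonzero_degree:
  assumes "k \<ge> 1"
  shows "continuant k n \<noteq> 0 \<and> degree (continuant k n) = n * k"
  using assms
proof (induction k n rule: continuant.induct)
  case (3 k n)
  then have "degree (monom 1 k * continuant k (Suc n)) = Suc (Suc n) * k"
    by (simp add: degree_mult_eq degree_monom_eq)
  moreover from this 3 have "degree (continuant k n) < degree (monom 1 k * continuant k (Suc n))"
    by simp
  ultimately have "degree (continuant k (Suc (Suc n))) = Suc (Suc n) * k"
    by (simp add: degree_add_eq_left)
  with "3.prems" show ?case by (metis degree_0 mult_is_0 nat.distinct(1) not_one_le_zero)
qed (simp_all add: degree_monom_eq)

locale metallic_root =
  fixes k :: nat and \<alpha> :: "rat fls"
  assumes k_ge_1: "k \<ge> 1"
    and root: "\<alpha> * \<alpha> = fls_X_inv ^ k * \<alpha> + 1"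
    and subdegree_root: "fls_subdegree \<alpha> = - int k"
begin

definition conj :: "rat fls" where "conj = fls_X_inv ^ k - \<alpha>"

definition convergent :: "nat \<Rightarrow> rat fls" where
  "convergent n = poly_fls (continuant k (Suc n)) / poly_fls (continuant k n)"

lemma root_times_conj: "\<alpha> * conj = -1"
  using root by (simp add: conj_def algebra_simps)

lemma root_nonzero: "\<alpha> \<noteq> 0" and conj_nonzero: "conj \<noteq> 0"
  using root_times_conj by auto

lemma subdegree_conj: "fls_subdegree conj = int k"
  using arg_cong[OF root_times_conj, of fls_subdegree] root_nonzero conj_nonzero subdegree_root
  by simp

lemma continuant_nonzero [simp]: "continuant k n \<noteq> 0"
  and degree_continuant [simp]: "degree (continuant k n) = n * k"
  using continuant_nonzero_degree[OF k_ge_1] by simp_all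

lemma continuant_error:
  "poly_fls (continuant k (Suc n)) - \<alpha> * poly_fls (continuant k n) = conj ^ Suc n"
proof (induction n)
  case 0
  then show ?case by (simp add: conj_def poly_fls_monom)
next
  case (Suc n)
  let ?Q = "\<lambda>n. poly_fls (continuant k n)"
  have conj_root: "conj * (\<alpha> * ?Q n) = - ?Q n"
    using root_times_conj by (simp add: mult.assoc[symmetric] mult.commute)
  have "?Q (Suc (Suc n)) - \<alpha> * ?Q (Suc n) = conj * ?Q (Suc n) + ?Q n"
    by (simp add: conj_def poly_fls_monom algebra_simps)
  also have "\<dots> = conj * (?Q (Suc n) - \<alpha> * ?Q n)"
    using conj_root by (simp add: right_diff_distrib)
  also have "\<dots> = conj ^ Suc (Suc n)" using Suc by simp
  finally show ?case .
qed

lemma root_minus_convergent: "\<alpha> - convergent n = - (conj ^ Suc n) / poly_fls (continuant k n)"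
proof -
  have "\<alpha> - convergent n = - (poly_fls (continuant k (Suc n)) - \<alpha> * poly_fls (continuant k n))
                           / poly_fls (continuant k n)"
    by (simp add: convergent_def field_simps)
  then show ?thesis by (simp only: continuant_error)
qed

lemma subdegree_root_minus_convergent:
  "fls_subdegree (\<alpha> - convergent n) = int ((2 * n + 1) * k)"
  unfolding root_minus_convergent using conj_nonzero
  by (simp add: fls_divide_subdegree fls_subdegree_poly_fls fls_subdegree_pow subdegree_conj
      del: power_Suc) (simp add: algebra_simps)

lemma convergent_in_approx_set: "convergent n \<in> approx_set \<alpha> (int k)"
proof -
  have "ldeg (\<alpha> - convergent n) \<le> - 2 * int (degree (continuant k n)) - int k"
    using subdegree_root_minus_convergent[of n] by (simp add: ldeg_def algebra_simps)
  then show ?thesis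
    unfolding approx_set_def mem_Collect_eq convergent_def
    by (intro exI[of _ "continuant k (Suc n)"] exI[of _ "continuant k n"]) simp
qed

lemma approx_set_infinite: "infinite (approx_set \<alpha> (int k))"
proof -
  have "inj convergent"
  proof
    fix m n
    assume "convergent m = convergent n"
    then have "int ((2 * m + 1) * k) = int ((2 * n + 1) * k)"
      using subdegree_root_minus_convergent by metis
    with k_ge_1 show "m = n" by simp
  qed
  then show ?thesis
    using range_inj_infinite convergent_in_approx_set infinite_super by (metis image_subsetI)
qed

text \<open>Liouville's argument: p^2 - T^k p q - q^2 = q^2 (p/q - \<alpha>) (p/q - conj) is a nonzero
  polynomial, so it cannot vanish at infinity; this caps the quality of approximation at k.\<close>

lemma norm_form_eq:
  assumes "q \<noteq> 0"
  shows "poly_fls (p * p - monom 1 k * p * q - q * q)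
    = poly_fls q * poly_fls q * ((poly_fls p / poly_fls q - \<alpha>) * (poly_fls p / poly_fls q - conj))"
proof -
  define r where "r = poly_fls p / poly_fls q"
  have "poly_fls (p * p - monom 1 k * p * q - q * q)
      = poly_fls q * poly_fls q * (r * r - fls_X_inv ^ k * r - 1)"
    using assms by (simp add: r_def poly_fls_monom field_simps)
  also have "r * r - fls_X_inv ^ k * r - 1 = (r - \<alpha>) * (r - conj)"
    using root by (simp add: conj_def algebra_simps)
  finally show ?thesis unfolding r_def .
qed

lemma approx_set_empty: "approx_set \<alpha> (int k + 1) = {}"
proof (rule ccontr)
  assume "approx_set \<alpha> (int k + 1) \<noteq> {}"
  then obtain p q where q: "q \<noteq> 0"
    and le: "ldeg (\<alpha> - poly_fls p / poly_fls q) \<le> - 2 * int (degree q) - (int k + 1)"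
    unfolding approx_set_def by blast
  define r where "r = poly_fls p / poly_fls q"
  have "\<alpha> \<noteq> r" using le by (auto simp: r_def ldeg_def)
  have d: "fls_subdegree (\<alpha> - r) \<ge> 2 * int (degree q) + int k + 1"
    using le by (simp add: r_def ldeg_def)
  have "fls_subdegree (\<alpha> - conj) = - int k"
    using fls_subdegree_diff_eq1[of \<alpha> conj] root_nonzero subdegree_root subdegree_conj k_ge_1
    by simp
  moreover have "r - conj = (\<alpha> - conj) - (\<alpha> - r)" by simp
  ultimately have rc: "fls_subdegree (r - conj) = - int k" "r \<noteq> conj"
    using fls_subdegree_diff_eq1[of "\<alpha> - conj" "\<alpha> - r"] d k_ge_1 by force+
  define N where "N = p * p - monom 1 k * p * q - q * q"
  have N: "poly_fls N = poly_fls q * poly_fls q * ((r - \<alpha>) * (r - conj))"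
    unfolding N_def r_def by (rule norm_form_eq[OF q])
  have "r - \<alpha> \<noteq> 0" using \<open>\<alpha> \<noteq> r\<close> by simp
  have "poly_fls N \<noteq> 0" using q \<open>r - \<alpha> \<noteq> 0\<close> rc(2) unfolding N by simp
  then have "fls_subdegree (poly_fls N) \<le> 0" by (simp add: fls_subdegree_poly_fls)
  moreover have "fls_subdegree (poly_fls N) = - 2 * int (degree q) + fls_subdegree (\<alpha> - r) - int k"
    using q \<open>r - \<alpha> \<noteq> 0\<close> rc unfolding N fls_subdegree_minus_sym[of \<alpha> r]
    by (simp add: fls_subdegree_poly_fls)
  ultimately show False using d by simp
qed

lemma not_in_rat_funs: "\<alpha> \<notin> rat_funs"
proof
  assume "\<alpha> \<in> rat_funs"
  then obtain a b where b: "b \<noteq> 0" and a: "\<alpha> = poly_fls a / poly_fls b"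
    unfolding rat_funs_def by blast
  define n where "n = degree b"
  have "fls_subdegree (\<alpha> - convergent n) \<noteq> 0"
    unfolding subdegree_root_minus_convergent of_nat_eq_0_iff using k_ge_1 by simp
  then have "\<alpha> \<noteq> convergent n" by auto
  then have "fls_subdegree (\<alpha> - convergent n) \<le> int (degree b) + int (degree (continuant k n))"
    unfolding convergent_def by (rule rat_fun_approx_bound[OF b continuant_nonzero a])
  then have "(2 * n + 1) * k \<le> n + n * k"
    unfolding subdegree_root_minus_convergent degree_continuant n_def[symmetric] by linarith
  moreover have "(2 * n + 1) * k = n * k + n * k + k" by (simp add: algebra_simps)
  moreover have "n \<le> n * k" using k_ge_1 by simp
  ultimately show False using k_ge_1 by linarith
qed

lemma lag_eq: "lag \<alpha> = ereal (of_int (int k))"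
proof -
  have "infinite (approx_set \<alpha> j) \<longleftrightarrow> j \<le> int k" for j
  proof
    assume "infinite (approx_set \<alpha> j)"
    then show "j \<le> int k"
      using approx_set_empty approx_set_infinite_mono[of \<alpha> j "int k + 1"] by force
  qed (use approx_set_infinite approx_set_infinite_mono in blast)
  then have "{ereal (of_int j) | j. infinite (approx_set \<alpha> j)}
      = {ereal (of_int j) | j. j \<le> int k}"
    by simp
  also have "Sup \<dots> = ereal (of_int (int k))"
  proof (rule antisym)
    show "Sup {ereal (of_int j) | j. j \<le> int k} \<le> ereal (of_int (int k))"
      by (rule Sup_least) force
    show "ereal (of_int (int k)) \<le> Sup {ereal (of_int j) | j. j \<le> int k}"
      by (rule Sup_upper) blast
  qed
  finally show ?thesis unfolding lag_eq_Sup_approx_set .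
qed

end

lemma of_int_in_lagrange_spectrum:
  assumes "k \<ge> 1"
  shows "ereal (of_int k) \<in> lagrange_spectrum"
proof -
  from assms have "nat k \<ge> 1" by simp
  with exists_metallic_root obtain \<alpha> where "metallic_root (nat k) \<alpha>"
    unfolding metallic_root_def by blast
  then interpret metallic_root "nat k" \<alpha> .
  have "lag \<alpha> = ereal (of_int k)" using lag_eq assms by simp
  then show ?thesis unfolding lagrange_spectrum_def mem_Collect_eq
    by (intro exI[of _ \<alpha>]) (simp add: not_in_rat_funs)
qed

section \<open>A lacunary series with infinite approximation exponent\<close>

text \<open>The partial sums of X^1 + X^3 + X^9 + X^27 + ... (X = 1/T) are p/T^(3^j) with errors of
  degree -3^(j+1), which beats -2 deg q = -2 * 3^j by an unbounded margin.\<close>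

definition lacunary :: "rat fls" where
  "lacunary = Abs_fls (\<lambda>n. if \<exists>i. n = int (3 ^ i) then 1 else 0)"

definition lacunary_partial :: "nat \<Rightarrow> rat fls" where
  "lacunary_partial j = (\<Sum>i\<le>j. fls_X ^ (3 ^ i))"

lemma lacunary_nth: "lacunary $$ n = (if \<exists>i. n = int (3 ^ i) then 1 else 0)"
proof -
  have "\<forall>\<^sub>\<infinity>m. (if \<exists>i. - int m = int (3 ^ i) then 1 else 0 :: rat) = 0"
  proof (rule always_eventually, intro allI)
    fix m :: nat
    have "- int m \<noteq> int (3 ^ i)" for i
    proof -
      have "0 < int (3 ^ i)" by simp
      then show ?thesis by linarith
    qed
    then show "(if \<exists>i. - int m = int (3 ^ i) then 1 else 0 :: rat) = 0" by simp
  qed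
  then show ?thesis unfolding lacunary_def by simp
qed

lemma lacunary_partial_nth:
  "lacunary_partial j $$ n = (if \<exists>i\<le>j. n = int (3 ^ i) then 1 else 0)"
proof (induction j)
  case 0
  then show ?case by (simp add: lacunary_partial_def)
next
  case (Suc j)
  have "lacunary_partial (Suc j) $$ n
      = lacunary_partial j $$ n + (if n = int (3 ^ Suc j) then 1 else 0)"
    by (simp add: lacunary_partial_def)
  moreover have "int (3 ^ Suc j) \<noteq> int (3 ^ i)" if "i \<le> j" for i
  proof -
    have "(3::nat) ^ i < 3 ^ Suc j" using that by (intro power_strict_increasing) auto
    then show ?thesis by linarith
  qed
  ultimately show ?case unfolding Suc by (auto simp: le_Suc_eq)
qed

lemma lacunary_minus_partial_nth:
  "(lacunary - lacunary_partial j) $$ n = (if \<exists>i>j. n = int (3 ^ i) then 1 else 0)"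
proof -
  have "(\<exists>i. n = int (3 ^ i)) \<and> \<not> (\<exists>i\<le>j. n = int (3 ^ i)) \<longleftrightarrow> (\<exists>i>j. n = int (3 ^ i))"
  proof
    assume "\<exists>i>j. n = int (3 ^ i)"
    then obtain i where "i > j" "n = int (3 ^ i)" by blast
    moreover from \<open>i > j\<close> have "int (3 ^ i) \<noteq> int (3 ^ i')" if "i' \<le> j" for i'
      using that by simp
    ultimately show "(\<exists>i. n = int (3 ^ i)) \<and> \<not> (\<exists>i\<le>j. n = int (3 ^ i))" by auto
  qed (metis not_le)
  moreover have "(\<exists>i\<le>j. n = int (3 ^ i)) \<longrightarrow> (\<exists>i. n = int (3 ^ i))" by blast
  ultimately show ?thesis by (auto simp: lacunary_nth lacunary_partial_nth)
qed

lemma subdegree_lacunary_minus_partial: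
  "lacunary - lacunary_partial j \<noteq> 0 \<and>
   fls_subdegree (lacunary - lacunary_partial j) = int (3 ^ Suc j)"
proof -
  have lead: "(lacunary - lacunary_partial j) $$ int (3 ^ Suc j) = 1"
    unfolding lacunary_minus_partial_nth by auto
  have "(lacunary - lacunary_partial j) $$ n = 0" if "n < int (3 ^ Suc j)" for n
  proof -
    have "n \<noteq> int (3 ^ i)" if "i > j" for i
    proof -
      have "(3::nat) ^ Suc j \<le> 3 ^ i" using that by (intro power_increasing) auto
      with \<open>n < int (3 ^ Suc j)\<close> show ?thesis by linarith
    qed
    then show ?thesis unfolding lacunary_minus_partial_nth by auto
  qed
  with lead have "fls_subdegree (lacunary - lacunary_partial j) = int (3 ^ Suc j)"
    by (intro fls_subdegree_eqI) auto
  with lead show ?thesis by auto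
qed

lemma lacunary_partial_eq:
  "lacunary_partial j = poly_fls (\<Sum>i\<le>j. monom 1 (3 ^ j - 3 ^ i)) / poly_fls (monom 1 (3 ^ j))"
proof -
  have X_pow: "fls_X ^ a * fls_X_inv ^ b = (fls_X_inv ^ (b - a) :: rat fls)" if "a \<le> b" for a b
  proof -
    have "fls_X_inv ^ b = (fls_X_inv ^ a * fls_X_inv ^ (b - a) :: rat fls)"
      using that by (simp flip: power_add)
    moreover have "fls_X ^ a * fls_X_inv ^ a = (1 :: rat fls)"
      by (simp flip: power_mult_distrib add: fls_X_times_conv_shift)
    ultimately show ?thesis by (metis mult.assoc mult_1)
  qed
  have "poly_fls (\<Sum>i\<le>j. monom 1 (3 ^ j - 3 ^ i)) = (\<Sum>i\<le>j. fls_X ^ (3 ^ i) * fls_X_inv ^ (3 ^ j))"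
    unfolding poly_fls_sum poly_fls_monom
    by (rule sum.cong) (auto intro!: X_pow[symmetric] power_increasing)
  also have "\<dots> = lacunary_partial j * poly_fls (monom 1 (3 ^ j))"
    by (simp add: lacunary_partial_def sum_distrib_right poly_fls_monom)
  finally have numerator: "poly_fls (\<Sum>i\<le>j. monom 1 (3 ^ j - 3 ^ i))
    = lacunary_partial j * poly_fls (monom 1 (3 ^ j))" .
  have "poly_fls (monom (1::rat) (3 ^ j)) \<noteq> 0" by simp
  then show ?thesis unfolding numerator by (rule nonzero_mult_div_cancel_right[symmetric])
qed

lemma lacunary_partial_in_approx_set:
  assumes "k \<le> int (3 ^ j)"
  shows "lacunary_partial j \<in> approx_set lacunary k"
proof -
  have "ldeg (lacunary - lacunary_partial j) = - int (3 ^ Suc j)"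
    using subdegree_lacunary_minus_partial by (simp add: ldeg_def)
  also have "\<dots> \<le> - 2 * int (degree (monom (1::rat) (3 ^ j))) - k"
    using assms by (simp add: degree_monom_eq)
  finally show ?thesis
    unfolding approx_set_def mem_Collect_eq lacunary_partial_eq
    by (intro exI[of _ "\<Sum>i\<le>j. monom 1 (3 ^ j - 3 ^ i)"] exI[of _ "monom 1 (3 ^ j)"])
      (simp add: lacunary_partial_eq)
qed

lemma approx_set_lacunary_infinite: "infinite (approx_set lacunary k)"
proof -
  define r where "r j = lacunary_partial (j + nat k)" for j
  have "inj r"
  proof
    fix m n
    assume "r m = r n"
    then have "int (3 ^ Suc (m + nat k)) = int (3 ^ Suc (n + nat k))"
      using subdegree_lacunary_minus_partial unfolding r_def by metis
    then show "m = n" by simp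
  qed
  moreover have "r j \<in> approx_set lacunary k" for j
  proof -
    have "(2::nat) ^ (j + nat k) \<le> 3 ^ (j + nat k)" by (rule power_mono) auto
    then have "j + nat k < 3 ^ (j + nat k)" using less_exp[of "j + nat k"] by linarith
    then show ?thesis unfolding r_def by (intro lacunary_partial_in_approx_set) linarith
  qed
  ultimately show ?thesis
    using range_inj_infinite infinite_super by (metis image_subsetI)
qed

lemma lacunary_not_in_rat_funs: "lacunary \<notin> rat_funs"
  using approx_set_lacunary_infinite
  by (intro not_in_rat_funs_if_approx_set_nonempty) (metis finite.emptyI)

lemma lag_lacunary: "lag lacunary = \<infinity>"
proof -
  have "{ereal (of_int k) | k. infinite (approx_set lacunary k)} = range (\<lambda>k. ereal (of_int k))"
    using approx_set_lacunary_infinite by auto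
  moreover have "(SUP k. ereal (of_int k)) = \<infinity>"
  proof (rule SUP_PInfty)
    fix n :: nat
    show "\<exists>k\<in>UNIV. ereal (real n) \<le> ereal (of_int k)" by (rule bexI[of _ "int n"]) simp_all
  qed
  ultimately show ?thesis unfolding lag_eq_Sup_approx_set by simp
qed

lemma lagrange_spectrum_eq: "lagrange_spectrum = posint_or_infinity"
proof (intro equalityI subsetI)
  fix x
  assume "x \<in> posint_or_infinity"
  then consider k :: int where "k \<ge> 1" "x = ereal (of_int k)" | "x = \<infinity>"
    unfolding posint_or_infinity_def by blast
  then show "x \<in> lagrange_spectrum"
  proof cases
    case 2
    with lag_lacunary lacunary_not_in_rat_funs show ?thesis
      unfolding lagrange_spectrum_def by force
  qed (simp add: of_int_in_lagrange_spectrum)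
qed (auto simp: lagrange_spectrum_def intro: lag_in_posint_or_infinity)

theorem theorem9:
  shows "lagrange_spectrum = {Lval A | A :: int \<Rightarrow> rat poly. \<forall>i. degree (A i) \<ge> 1}"
  unfolding lagrange_spectrum_eq Lval_image ..

end
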